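(* Let $K\subset\mathbb E$ be a regular cone, $F$ a $\nu$-normal barrier for $K$, and $H:\mathbb E\to\mathbb E^*$ a self-adjoint positive definite linear operator. Suppose $u\in\mathbb E$ satisfies $\mathcal E_H(u):=\{w\in\mathbb E:\langle H(w-u),w-u\rangle\le 1\}\subseteq K$, and that for some $x\in\operatorname{int}K$ we have $\langle\nabla F(x),u-x\rangle\ge 0$. Then $H\succeq \frac{1}{4\nu^2}\nabla^2F(x)$. In particular (taking $H$ to be a suitable multiple of $\nabla^2F(u)$ via the Dikin ellipsoid), if $x,u\in\operatorname{int}K$ and $\langle\nabla F(x),u-x\rangle\ge0$ then $\nabla^2F(u)\succeq\frac1{4\nu^2}\nabla^2F(x)$; and if $x\in\operatorname{int}K$, $u\in K$, then $\nabla^2F(x+u)\preceq 4\nu^2\nabla^2F(x)$.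
   Context: $\mathbb E$ is a finite-dimensional real vector space with dual $\mathbb E^*$ and pairing $\langle s,x\rangle$. A cone $K\subset\mathbb E$ is regular if it is closed, convex, pointed, with nonempty interior. A $\nu$-normal barrier for $K$ is a function $F:\operatorname{int}K\to\mathbb R$ which is a $\nu$-self-concordant barrier (i.e. $|D^3F(x)[h,h,h]|\le 2\langle\nabla^2F(x)h,h\rangle^{3/2}$ for all $x\in\operatorname{int}K,h\in\mathbb E$, $F(x)\to\infty$ as $x\to\partial K$, and $\langle\nabla F(x),[\nabla^2F(x)]^{-1}\nabla F(x)\rangle\le\nu$) and is logarithmically homogeneous: $F(\tau x)=F(x)-\nu\ln\tau$ for all $x\in\operatorname{int}K$, $\tau>0$. For self-adjoint operators $P,R:\mathbb E\to\mathbb E^*$, $P\preceq R$ means $\langle (R-P)h,h\rangle\ge0$ for all $h$. *)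

theory Defs
  imports "HOL-Analysis.Analysis"
begin

(* E is modelled by a Euclidean space 'a; its dual E* is identified with 'a via the
   inner product, so the pairing <s,x> is s \<bullet> x and operators E -> E* are maps 'a => 'a. *)

definition regular_cone :: "'a::euclidean_space set \<Rightarrow> bool" where
  "regular_cone K \<longleftrightarrow> cone K \<and> closed K \<and> convex K \<and>
     K \<inter> uminus ` K = {0} \<and> interior K \<noteq> {}"

definition self_adjoint :: "('a::euclidean_space \<Rightarrow> 'a) \<Rightarrow> bool" where
  "self_adjoint H \<longleftrightarrow> linear H \<and> (\<forall>x y. H x \<bullet> y = x \<bullet> H y)"

definition pos_def_op :: "('a::euclidean_space \<Rightarrow> 'a) \<Rightarrow> bool" where
  "pos_def_op H \<longleftrightarrow> self_adjoint H \<and> (\<forall>h. h \<noteq> 0 \<longrightarrow> H h \<bullet> h > 0)"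

definition loewner_le :: "('a::euclidean_space \<Rightarrow> 'a) \<Rightarrow> ('a \<Rightarrow> 'a) \<Rightarrow> bool" where
  "loewner_le P R \<longleftrightarrow> (\<forall>h. P h \<bullet> h \<le> R h \<bullet> h)"

definition grad_hess :: "'a::euclidean_space set \<Rightarrow> ('a \<Rightarrow> real) \<Rightarrow> ('a \<Rightarrow> 'a) \<Rightarrow> ('a \<Rightarrow> 'a \<Rightarrow> 'a) \<Rightarrow> bool" where
  "grad_hess K F gF HF \<longleftrightarrow>
     (\<forall>x\<in>interior K. (F has_derivative (\<lambda>h. gF x \<bullet> h)) (at x)
                    \<and> (gF has_derivative HF x) (at x))"

(* nu-self-concordant barrier; the third derivative D^3F(x)[h,h,h] is the derivative
   at x, in direction h, of y \<mapsto> <\<nabla>^2F(y)h,h> *)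
definition self_conc_barrier ::
  "'a::euclidean_space set \<Rightarrow> real \<Rightarrow> ('a \<Rightarrow> real) \<Rightarrow> ('a \<Rightarrow> 'a) \<Rightarrow> ('a \<Rightarrow> 'a \<Rightarrow> 'a) \<Rightarrow> bool" where
  "self_conc_barrier K \<nu> F gF HF \<longleftrightarrow>
     grad_hess K F gF HF \<and> convex_on (interior K) F \<and>
     (\<forall>x\<in>interior K. \<forall>h. \<exists>D3. ((\<lambda>y. HF y h \<bullet> h) has_derivative D3) (at x) \<and>
          \<bar>D3 h\<bar> \<le> 2 * (HF x h \<bullet> h) powr (3/2)) \<and>
     (\<forall>b\<in>frontier K. filterlim F at_top (at b within interior K)) \<and>
     (\<forall>x\<in>interior K. bij (HF x) \<and> gF x \<bullet> inv (HF x) (gF x) \<le> \<nu>)"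

definition normal_barrier ::
  "'a::euclidean_space set \<Rightarrow> real \<Rightarrow> ('a \<Rightarrow> real) \<Rightarrow> ('a \<Rightarrow> 'a) \<Rightarrow> ('a \<Rightarrow> 'a \<Rightarrow> 'a) \<Rightarrow> bool" where
  "normal_barrier K \<nu> F gF HF \<longleftrightarrow>
     self_conc_barrier K \<nu> F gF HF \<and>
     (\<forall>x\<in>interior K. \<forall>\<tau>>0. F (\<tau> *\<^sub>R x) = F x - \<nu> * ln \<tau>)"

definition ellipsoid :: "('a::euclidean_space \<Rightarrow> 'a) \<Rightarrow> 'a \<Rightarrow> 'a set" where
  "ellipsoid H u = {w. H (w - u) \<bullet> (w - u) \<le> 1}"

end

theory Submission
  imports Defs
begin

(* Along a ray t \<mapsto> x + t y the self-concordance bound |q'| <= 2 q^(3/2) for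
   q t = <D^2F(x + t y) y, y> makes q^(-1/2) 1-Lipschitz.  The slope <DF(x + t y), y> has
   derivative q and stays <= 0 for y in K (convexity and logarithmic homogeneity), which
   forces <D^2F(x) y, y>^(1/2) <= - <DF(x), y> on K.  If u + h, u - h lie in K and
   <DF(x), u - x> >= 0, then - <DF(x), u> <= nu by Euler's identity <DF(x), x> = - nu, so
   this bound at u + h and u - h together with the parallelogram law gives
   <D^2F(x) h, h> <= 2 nu^2.  Rescaling h into the ellipsoid gives the first claim; the Dikin
   ellipsoid {h. <D^2F(u) h, h> < 1} + u \<subseteq> int K (the same Lipschitz bound, now from above,
   against the blow-up of F at the boundary) gives the second; and <DF(x + u), - u> >= 0
   reduces the third to the second. *)

lemma cone_scaleR_interior:
  fixes K :: "'a::real_normed_vector set"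
  assumes "cone K" "x \<in> interior K" "c > 0"
  shows "c *\<^sub>R x \<in> interior K"
proof -
  have "open ((\<lambda>x. c *\<^sub>R x) ` interior K)" using open_scaling[of c "interior K"] assms by simp
  moreover have "(\<lambda>x. c *\<^sub>R x) ` interior K \<subseteq> K"
    using assms interior_subset mem_cone by fastforce
  ultimately show ?thesis using assms interior_maximal by blast
qed

lemma convex_cone_add_interior:
  fixes K :: "'a::real_normed_vector set"
  assumes "cone K" "convex K" "x \<in> interior K" "y \<in> K"
  shows "x + y \<in> interior K"
proof -
  have "open ((\<lambda>x. y + x) ` interior K)" using open_translation[of "interior K" y] by simp
  moreover have "(\<lambda>x. y + x) ` interior K \<subseteq> K"
    using assms interior_subset convex_cone by blast
  moreover have "x + y \<in> (\<lambda>x. y + x) ` interior K" using assms by (auto simp: add.commute)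
  ultimately show ?thesis using interior_maximal by blast
qed

lemma pointed_zero_notin_interior:
  fixes K :: "'a::euclidean_space set"
  assumes "K \<inter> uminus ` K = {0}"
  shows "0 \<notin> interior K"
proof
  assume "0 \<in> interior K"
  then obtain e where e: "e > 0" "ball 0 e \<subseteq> K" using mem_interior by blast
  obtain b :: 'a where b: "b \<in> Basis" using nonempty_Basis by blast
  define w where "w = (e / 2) *\<^sub>R b"
  have nw: "norm w = e / 2" using b e by (simp add: w_def)
  have "w \<in> K" "- w \<in> K" using e nw by (auto intro!: e(2)[THEN subsetD])
  hence "w \<in> K \<inter> uminus ` K" by (auto intro: image_eqI[of w uminus "- w"])
  hence "w = 0" using assms by blast
  thus False using nw e by simp
qed

lemma first_exit_from_interior:
  fixes K :: "'a::real_normed_vector set"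
  assumes "closed K" "u \<in> interior K" "u + v \<notin> interior K"
  obtains T where "0 < T" "T \<le> 1" "u + T *\<^sub>R v \<in> frontier K"
    "\<And>s. 0 \<le> s \<Longrightarrow> s < T \<Longrightarrow> u + s *\<^sub>R v \<in> interior K"
proof -
  define p where "p s = u + s *\<^sub>R v" for s :: real
  define B where "B = {0..1} \<inter> p -` (- interior K)"
  have "1 \<in> B" using assms(3) by (simp add: B_def p_def)
  moreover have "closed B" unfolding B_def p_def
    by (intro closed_Int closed_atLeastAtMost continuous_closed_vimage continuous_intros)
       (simp add: closed_Compl)
  moreover have bdd: "bdd_below B" by (rule bdd_belowI[of _ 0]) (auto simp: B_def)
  ultimately have "Inf B \<in> B" using closed_contains_Inf by blast
  define T where "T = Inf B"
  have T: "0 \<le> T" "T \<le> 1" "p T \<notin> interior K" using \<open>Inf B \<in> B\<close> by (auto simp: B_def T_def)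
  have below: "p s \<in> interior K" if "0 \<le> s" "s < T" for s
  proof (rule ccontr)
    assume "p s \<notin> interior K"
    hence "T \<le> s" unfolding T_def using that T bdd by (intro cInf_lower) (auto simp: B_def)
    thus False using that by simp
  qed
  have "T \<noteq> 0" using T assms(2) by (auto simp: p_def)
  hence T0: "T > 0" using T by simp
  have "p T \<in> K"
  proof (rule Lim_in_closed_set[OF assms(1)])
    show "(p \<longlongrightarrow> p T) (at_left T)" unfolding p_def by (intro tendsto_intros)
    show "eventually (\<lambda>s. p s \<in> K) (at_left T)"
      using eventually_at_left_real[OF T0]
      by eventually_elim (use below[THEN subsetD[OF interior_subset]] in simp)
  qed simp
  hence "p T \<in> frontier K" using T assms(1) by (simp add: frontier_def closure_closed)
  with T0 T below show ?thesis using that unfolding p_def by blast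
qed

lemma has_real_derivative_along_line:
  assumes "(f has_derivative f') (at (z + t *\<^sub>R y))"
  shows "((\<lambda>t. f (z + t *\<^sub>R y)) has_real_derivative f' y) (at t)"
proof -
  have "linear f'" using assms has_derivative_linear by blast
  have "((\<lambda>t. z + t *\<^sub>R y) has_derivative (\<lambda>s. s *\<^sub>R y)) (at t)"
    by (auto intro!: derivative_eq_intros)
  from has_derivative_compose[OF this assms]
  have "((\<lambda>t. f (z + t *\<^sub>R y)) has_derivative (\<lambda>s. f' (s *\<^sub>R y))) (at t)" .
  moreover have "(\<lambda>s. f' (s *\<^sub>R y)) = (*) (f' y)"
    using \<open>linear f'\<close> by (auto simp: linear_scale)
  ultimately show ?thesis by (simp add: has_field_derivative_def)
qed

lemma has_real_derivative_le_right_slopes: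
  fixes f :: "real \<Rightarrow> real"
  assumes "(f has_real_derivative D) (at 0)" "e > 0"
    and "\<And>t. 0 < t \<Longrightarrow> t < e \<Longrightarrow> (f t - f 0) / t \<le> B"
  shows "D \<le> B"
proof -
  have "((\<lambda>y. (f y - f 0) / (y - 0)) \<longlongrightarrow> D) (at 0)" using assms(1) has_field_derivative_iff by blast
  hence "((\<lambda>y. (f y - f 0) / y) \<longlongrightarrow> D) (at_right 0)"
    by (simp add: tendsto_mono[OF at_le[of "{0<..}" UNIV]])
  moreover have "eventually (\<lambda>t. (f t - f 0) / t \<le> B) (at_right 0)"
    using eventually_at_right_real[OF assms(2)] by eventually_elim (use assms(3) in auto)
  ultimately show ?thesis using tendsto_upperbound by force
qed

lemma has_real_derivative_bounded_growth:
  fixes f f' :: "real \<Rightarrow> real"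
  assumes "0 \<le> s"
    and "\<And>t. 0 \<le> t \<Longrightarrow> t \<le> s \<Longrightarrow> (f has_real_derivative f' t) (at t) \<and> f' t \<le> L"
  shows "f s \<le> f 0 + L * s"
proof -
  have "(\<lambda>t. L * t - f t) 0 \<le> (\<lambda>t. L * t - f t) s"
  proof (rule DERIV_nonneg_imp_nondecreasing[OF assms(1)])
    fix t assume "0 \<le> t" "t \<le> s"
    with assms(2) have "((\<lambda>t. L * t - f t) has_real_derivative L * 1 - f' t) (at t)" "f' t \<le> L"
      by (auto intro!: DERIV_diff DERIV_cmult DERIV_ident)
    thus "\<exists>y. ((\<lambda>t. L * t - f t) has_real_derivative y) (at t) \<and> 0 \<le> y" by auto
  qed
  thus ?thesis by simp
qed

lemma quadratic_form_scaleR: "linear f \<Longrightarrow> f (c *\<^sub>R h) \<bullet> (c *\<^sub>R h) = c\<^sup>2 * (f h \<bullet> h)"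
  by (simp add: linear_scale power2_eq_square)

lemma quadratic_form_le_of_sublevel:
  fixes A B :: "'a::real_inner \<Rightarrow> 'a"
  assumes "linear A" "linear B" "0 \<le> B h \<bullet> h"
    and sublevel: "\<And>k. B k \<bullet> k < 1 \<Longrightarrow> A k \<bullet> k \<le> C"
  shows "A h \<bullet> h \<le> 2 * C * (B h \<bullet> h)"
proof (cases "B h \<bullet> h = 0")
  case True
  have "A h \<bullet> h \<le> 0"
  proof (rule ccontr)
    assume "\<not> A h \<bullet> h \<le> 0"
    define t where "t = sqrt ((\<bar>C\<bar> + 1) / (A h \<bullet> h))"
    have "B (t *\<^sub>R h) \<bullet> (t *\<^sub>R h) = 0"
      unfolding quadratic_form_scaleR[OF assms(2)] using True by simp
    hence "A (t *\<^sub>R h) \<bullet> (t *\<^sub>R h) \<le> C" by (intro sublevel) (simp only:)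
    moreover have "A (t *\<^sub>R h) \<bullet> (t *\<^sub>R h) = \<bar>C\<bar> + 1"
      unfolding quadratic_form_scaleR[OF assms(1)] using \<open>\<not> A h \<bullet> h \<le> 0\<close> by (simp add: t_def)
    ultimately show False by simp
  qed
  thus ?thesis using True by simp
next
  case False
  define s where "s = 2 * (B h \<bullet> h)"
  have s: "s > 0" using False assms(3) by (simp add: s_def)
  define k where "k = inverse (sqrt s) *\<^sub>R h"
  have "B k \<bullet> k = 1 / 2"
    unfolding k_def quadratic_form_scaleR[OF assms(2)] using s by (simp add: power_inverse s_def)
  hence "A k \<bullet> k \<le> C" by (intro sublevel) simp
  moreover have "A k \<bullet> k = (A h \<bullet> h) / s"
    unfolding k_def quadratic_form_scaleR[OF assms(1)] using s by (simp add: power_inverse divide_inverse)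
  ultimately show ?thesis using s by (simp add: divide_le_eq s_def mult.assoc)
qed

definition self_concordant_on :: "real set \<Rightarrow> (real \<Rightarrow> real) \<Rightarrow> bool" where
  "self_concordant_on S q \<longleftrightarrow>
     (\<forall>t\<in>S. 0 \<le> q t \<and> (\<exists>D. (q has_real_derivative D) (at t) \<and> \<bar>D\<bar> \<le> 2 * q t * sqrt (q t)))"

lemma self_concordant_inverse_sqrt_deriv:
  fixes q :: "real \<Rightarrow> real"
  assumes e: "\<epsilon> > 0" and q0: "0 \<le> q t" and dq: "(q has_real_derivative D) (at t)"
    and bd: "\<bar>D\<bar> \<le> 2 * q t * sqrt (q t)"
  shows "\<exists>E. ((\<lambda>s. inverse (sqrt (q s + \<epsilon>))) has_real_derivative E) (at t) \<and> \<bar>E\<bar> \<le> 1"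
proof -
  define r where "r = sqrt (q t + \<epsilon>)"
  have rp: "r > 0" using e q0 by (simp add: r_def)
  have r2: "r * r = q t + \<epsilon>" using e q0 by (simp add: r_def)
  have d1: "((\<lambda>s. q s + \<epsilon>) has_real_derivative D + 0) (at t)"
    by (rule DERIV_add[OF dq DERIV_const])
  have d2: "((\<lambda>s. sqrt (q s + \<epsilon>)) has_real_derivative inverse r / 2 * (D + 0)) (at t)"
    unfolding r_def by (rule DERIV_chain2[OF DERIV_real_sqrt d1]) (use e q0 in simp)
  have d3: "((\<lambda>s. inverse (sqrt (q s + \<epsilon>))) has_real_derivative
       - (inverse r / 2 * (D + 0) * inverse (r\<^sup>2))) (at t)"
    using DERIV_inverse_fun[OF d2] rp by (simp add: numeral_2_eq_2 r_def)
  have "2 * q t * sqrt (q t) \<le> 2 * (r * r) * r"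
    using r2 e q0 by (intro mult_mono) (auto simp: r_def)
  hence "\<bar>- (inverse r / 2 * D * inverse (r\<^sup>2))\<bar> \<le> 1"
    using rp bd by (simp add: abs_mult power2_eq_square field_simps)
  thus ?thesis using d3 by auto
qed

(* The shift by \<epsilon> > 0 keeps the inverse square root differentiable where q vanishes. *)
lemma self_concordant_on_inverse_sqrt_lipschitz:
  assumes "\<epsilon> > 0" "a \<le> b" "self_concordant_on {a..b} q"
  shows "\<bar>inverse (sqrt (q b + \<epsilon>)) - inverse (sqrt (q a + \<epsilon>))\<bar> \<le> b - a"
proof -
  let ?f = "\<lambda>s. inverse (sqrt (q s + \<epsilon>))"
  have mono: "a + \<sigma> * ?f a \<le> b + \<sigma> * ?f b" if "\<bar>\<sigma>\<bar> = 1" for \<sigma>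
  proof (rule DERIV_nonneg_imp_nondecreasing[OF assms(2)])
    fix t assume "a \<le> t" "t \<le> b"
    then obtain D where "0 \<le> q t" "(q has_real_derivative D) (at t)" "\<bar>D\<bar> \<le> 2 * q t * sqrt (q t)"
      using assms(3) unfolding self_concordant_on_def by (meson atLeastAtMost_iff)
    then obtain E where "(?f has_real_derivative E) (at t)" "\<bar>E\<bar> \<le> 1"
      using self_concordant_inverse_sqrt_deriv[OF assms(1)] by blast
    moreover have "0 \<le> 1 + \<sigma> * E"
    proof -
      have "\<bar>\<sigma> * E\<bar> \<le> 1" using \<open>\<bar>E\<bar> \<le> 1\<close> that by (simp add: abs_mult)
      thus ?thesis by linarith
    qed
    ultimately show "\<exists>y. ((\<lambda>s. s + \<sigma> * ?f s) has_real_derivative y) (at t) \<and> 0 \<le> y"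
      by (intro exI[of _ "1 + \<sigma> * E"]) (auto intro!: DERIV_add DERIV_cmult DERIV_ident)
  qed
  show ?thesis using mono[of 1] mono[of "-1"] by simp
qed

lemma self_concordant_on_lower_bound:
  assumes e: "\<epsilon> > 0" and s: "0 \<le> s" and sc: "self_concordant_on {0..s} q"
  shows "inverse ((inverse (sqrt (q 0 + \<epsilon>)) + s)\<^sup>2) - \<epsilon> \<le> q s"
proof -
  define c where "c = inverse (sqrt (q 0 + \<epsilon>))"
  have q: "0 \<le> q 0" "0 \<le> q s" using sc s by (auto simp: self_concordant_on_def)
  have "inverse (sqrt (q s + \<epsilon>)) \<le> c + s"
    using self_concordant_on_inverse_sqrt_lipschitz[OF e s sc] by (simp add: c_def)
  moreover have "sqrt (q s + \<epsilon>) > 0" "c > 0" using q e by (auto simp: c_def)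
  ultimately have "inverse (c + s) \<le> sqrt (q s + \<epsilon>)"
    by (metis inverse_inverse_eq le_imp_inverse_le positive_imp_inverse_positive)
  hence "(inverse (c + s))\<^sup>2 \<le> (sqrt (q s + \<epsilon>))\<^sup>2"
    using \<open>c > 0\<close> s by (intro power_mono) auto
  thus ?thesis using q e by (simp add: power_inverse c_def)
qed

lemma self_concordant_on_upper_bound:
  assumes e: "\<epsilon> > 0" and s: "0 \<le> s" "s < inverse (sqrt (q 0 + \<epsilon>))"
    and sc: "self_concordant_on {0..s} q"
  shows "q s \<le> inverse ((inverse (sqrt (q 0 + \<epsilon>)) - s)\<^sup>2) - \<epsilon>"
proof -
  define c where "c = inverse (sqrt (q 0 + \<epsilon>))"
  have q: "0 \<le> q s" using sc s by (auto simp: self_concordant_on_def)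
  have "c - s \<le> inverse (sqrt (q s + \<epsilon>))"
    using self_concordant_on_inverse_sqrt_lipschitz[OF e s(1) sc] by (simp add: c_def)
  moreover have "sqrt (q s + \<epsilon>) > 0" "c - s > 0" using q e s by (auto simp: c_def)
  ultimately have "sqrt (q s + \<epsilon>) \<le> inverse (c - s)"
    by (metis inverse_inverse_eq le_imp_inverse_le)
  hence "(sqrt (q s + \<epsilon>))\<^sup>2 \<le> (inverse (c - s))\<^sup>2"
    using q e by (intro power_mono) auto
  thus ?thesis using q e by (simp add: power_inverse c_def)
qed

locale normal_barrier_cone =
  fixes K :: "'a::euclidean_space set" and \<nu> :: real and F :: "'a \<Rightarrow> real"
    and gF :: "'a \<Rightarrow> 'a" and HF :: "'a \<Rightarrow> 'a \<Rightarrow> 'a"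
  assumes regular: "regular_cone K" and barrier: "normal_barrier K \<nu> F gF HF"
begin

lemma cone_K: "cone K" and convex_K: "convex K" and closed_K: "closed K"
  and pointed_K: "K \<inter> uminus ` K = {0}" and interior_K_nonempty: "interior K \<noteq> {}"
  using regular by (auto simp: regular_cone_def)

lemma has_derivative_F: "z \<in> interior K \<Longrightarrow> (F has_derivative (\<lambda>h. gF z \<bullet> h)) (at z)"
  and has_derivative_gF: "z \<in> interior K \<Longrightarrow> (gF has_derivative HF z) (at z)"
  and convex_on_F: "convex_on (interior K) F"
  and F_tendsto_frontier: "b \<in> frontier K \<Longrightarrow> filterlim F at_top (at b within interior K)"
  and F_scaleR: "z \<in> interior K \<Longrightarrow> \<tau> > 0 \<Longrightarrow> F (\<tau> *\<^sub>R z) = F z - \<nu> * ln \<tau>"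
  using barrier by (auto simp: normal_barrier_def self_conc_barrier_def grad_hess_def)

lemma linear_HF: "z \<in> interior K \<Longrightarrow> linear (HF z)"
  using has_derivative_gF has_derivative_linear by blast

lemma add_ray_interior: "x \<in> interior K \<Longrightarrow> y \<in> K \<Longrightarrow> 0 \<le> t \<Longrightarrow> x + t *\<^sub>R y \<in> interior K"
  using convex_cone_add_interior cone_K convex_K mem_cone by blast

lemma F_line_deriv:
  "z + t *\<^sub>R y \<in> interior K \<Longrightarrow>
   ((\<lambda>t. F (z + t *\<^sub>R y)) has_real_derivative gF (z + t *\<^sub>R y) \<bullet> y) (at t)"
  using has_real_derivative_along_line[OF has_derivative_F] by blast

lemma gF_line_deriv:
  assumes "z + t *\<^sub>R y \<in> interior K"
  shows "((\<lambda>t. gF (z + t *\<^sub>R y) \<bullet> y) has_real_derivative HF (z + t *\<^sub>R y) y \<bullet> y) (at t)"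
proof -
  have "((\<lambda>v. gF v \<bullet> y) has_derivative (\<lambda>h. HF (z + t *\<^sub>R y) h \<bullet> y)) (at (z + t *\<^sub>R y))"
    using has_derivative_gF[OF assms] by (rule has_derivative_inner_left)
  thus ?thesis using has_real_derivative_along_line by fastforce
qed

lemma F_above_tangent:
  assumes z: "z \<in> interior K" and w: "w \<in> interior K"
  shows "F z + gF z \<bullet> (w - z) \<le> F w"
proof -
  have d: "((\<lambda>t. F (z + t *\<^sub>R (w - z))) has_real_derivative gF z \<bullet> (w - z)) (at 0)"
    using F_line_deriv[of z 0 "w - z"] z by simp
  have "gF z \<bullet> (w - z) \<le> F w - F z"
  proof (rule has_real_derivative_le_right_slopes[OF d zero_less_one])
    fix t :: real assume t: "0 < t" "t < 1"
    have "z + t *\<^sub>R (w - z) = (1 - t) *\<^sub>R z + t *\<^sub>R w" by (simp add: algebra_simps)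
    hence "F (z + t *\<^sub>R (w - z)) \<le> (1 - t) * F z + t * F w"
      using convex_onD[OF convex_on_F, of t z w] t z w by simp
    hence "F (z + t *\<^sub>R (w - z)) - F (z + 0 *\<^sub>R (w - z)) \<le> t * (F w - F z)"
      by (simp add: algebra_simps)
    thus "(F (z + t *\<^sub>R (w - z)) - F (z + 0 *\<^sub>R (w - z))) / t \<le> F w - F z"
      using t by (simp add: divide_le_eq mult.commute)
  qed
  thus ?thesis by simp
qed

lemma hessian_nonneg:
  assumes z: "z \<in> interior K"
  shows "0 \<le> HF z h \<bullet> h"
proof -
  define S where "S = (\<lambda>t. z + t *\<^sub>R h) -` interior K"
  have "open S" unfolding S_def by (intro continuous_open_vimage continuous_intros) simp
  moreover have "0 \<in> S" using z by (simp add: S_def)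
  ultimately have "0 \<in> interior S" by (simp add: interior_open)
  moreover have "mono_on S (\<lambda>t. gF (z + t *\<^sub>R h) \<bullet> h)"
  proof (rule mono_onI)
    fix s t assume "s \<in> S" "t \<in> S" "s \<le> t"
    let ?p = "\<lambda>t. z + t *\<^sub>R h"
    have ps: "?p s \<in> interior K" and pt: "?p t \<in> interior K"
      using \<open>s \<in> S\<close> \<open>t \<in> S\<close> by (auto simp: S_def)
    have "F (?p s) + gF (?p s) \<bullet> (?p t - ?p s) \<le> F (?p t)"
      and "F (?p t) + gF (?p t) \<bullet> (?p s - ?p t) \<le> F (?p s)"
      by (rule F_above_tangent[OF ps pt], rule F_above_tangent[OF pt ps])
    hence "0 \<le> (t - s) * (gF (?p t) \<bullet> h - gF (?p s) \<bullet> h)"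
      by (simp add: algebra_simps inner_diff_right)
    thus "gF (?p s) \<bullet> h \<le> gF (?p t) \<bullet> h"
      using \<open>s \<le> t\<close> by (cases "s = t") (auto simp: zero_le_mult_iff)
  qed
  moreover have "((\<lambda>t. gF (z + t *\<^sub>R h) \<bullet> h) has_real_derivative HF z h \<bullet> h) (at 0)"
    using gF_line_deriv[of z 0 h] z by simp
  ultimately show ?thesis by (intro mono_on_imp_deriv_nonneg) auto
qed

lemma self_concordant_on_line:
  assumes "\<And>s. s \<in> S \<Longrightarrow> x + s *\<^sub>R y \<in> interior K"
  shows "self_concordant_on S (\<lambda>s. HF (x + s *\<^sub>R y) y \<bullet> y)"
  unfolding self_concordant_on_def
proof
  fix t assume "t \<in> S"
  hence p: "x + t *\<^sub>R y \<in> interior K" by (rule assms)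
  let ?q = "HF (x + t *\<^sub>R y) y \<bullet> y"
  obtain D3 where d3: "((\<lambda>w. HF w y \<bullet> y) has_derivative D3) (at (x + t *\<^sub>R y))"
    and bound: "\<bar>D3 y\<bar> \<le> 2 * ?q powr (3/2)"
    using p barrier unfolding normal_barrier_def self_conc_barrier_def by blast
  have "((\<lambda>s. HF (x + s *\<^sub>R y) y \<bullet> y) has_real_derivative D3 y) (at t)"
    using has_real_derivative_along_line[OF d3] .
  moreover have "?q powr (3/2) = ?q * sqrt ?q"
  proof -
    have "?q powr (3/2) = ?q powr (1 + 1/2)" by simp
    also have "\<dots> = ?q * sqrt ?q"
      unfolding powr_add using hessian_nonneg[OF p] by (simp add: powr_half_sqrt)
    finally show ?thesis .
  qed
  ultimately show "0 \<le> ?q \<and> (\<exists>D. ((\<lambda>s. HF (x + s *\<^sub>R y) y \<bullet> y) has_real_derivative D) (at t)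
      \<and> \<bar>D\<bar> \<le> 2 * ?q * sqrt ?q)"
    using hessian_nonneg[OF p] bound by (auto simp: mult.assoc)
qed

lemma gradient_inner_self:
  assumes z: "z \<in> interior K"
  shows "gF z \<bullet> z = - \<nu>"
proof -
  have d1: "((\<lambda>t. F (0 + t *\<^sub>R z)) has_real_derivative gF (0 + 1 *\<^sub>R z) \<bullet> z) (at 1)"
    by (rule F_line_deriv) (use z in simp)
  have d2: "((\<lambda>t. F z - \<nu> * ln t) has_real_derivative - \<nu>) (at 1)"
    by (auto intro!: derivative_eq_intros)
  have "((\<lambda>t. F (0 + t *\<^sub>R z)) has_real_derivative - \<nu>) (at 1)"
    by (rule has_field_derivative_transform_within_open[OF d2, of "{0<..}"])
       (use F_scaleR z in auto)
  with d1 show ?thesis using DERIV_unique by fastforce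
qed

lemma F_tendsto_at_top_approaching_frontier:
  assumes "b \<in> frontier K" "(p \<longlongrightarrow> b) G" "eventually (\<lambda>s. p s \<in> interior K) G"
  shows "filterlim (\<lambda>s. F (p s)) at_top G"
proof -
  have "b \<notin> interior K" using assms(1) by (simp add: frontier_def)
  hence "filterlim p (at b within interior K) G"
    unfolding filterlim_at using assms(2,3) by (auto elim!: eventually_mono)
  thus ?thesis by (rule filterlim_compose[OF F_tendsto_frontier[OF assms(1)]])
qed

lemma nu_nonzero: "\<nu> \<noteq> 0"
proof
  assume "\<nu> = 0"
  obtain x where x: "x \<in> interior K" using interior_K_nonempty by blast
  have "0 \<notin> interior K" by (rule pointed_zero_notin_interior[OF pointed_K])
  moreover have "0 \<in> K" using cone_contains_0[OF cone_K] x interior_subset by blast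
  ultimately have "0 \<in> frontier K" using closed_K by (simp add: frontier_def closure_closed)
  moreover have "((\<lambda>s. s *\<^sub>R x) \<longlongrightarrow> 0) (at_right 0)"
    by (auto intro!: tendsto_eq_intros)
  moreover have ev: "eventually (\<lambda>s. s *\<^sub>R x \<in> interior K \<and> F (s *\<^sub>R x) = F x) (at_right 0)"
    using eventually_at_right_real[OF zero_less_one]
    by eventually_elim (use cone_scaleR_interior[OF cone_K x] F_scaleR[OF x] \<open>\<nu> = 0\<close> in auto)
  ultimately have "filterlim (\<lambda>s. F (s *\<^sub>R x)) at_top (at_right 0)"
    by (intro F_tendsto_at_top_approaching_frontier) (auto elim: eventually_mono)
  hence "eventually (\<lambda>s. F x < F (s *\<^sub>R x)) (at_right 0)" by (simp add: filterlim_at_top_dense)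
  with ev have "eventually (\<lambda>s::real. False) (at_right 0)" by eventually_elim simp
  thus False by simp
qed

lemma F_ray_estimate:
  assumes z: "z \<in> interior K" and y: "y \<in> interior K" and s: "s > 0"
  shows "F z + s * (gF z \<bullet> y) \<le> F (y + inverse s *\<^sub>R z) - \<nu> * ln s"
proof -
  have "inverse s *\<^sub>R z \<in> interior K" using cone_scaleR_interior[OF cone_K z] s by simp
  from convex_cone_add_interior[OF cone_K convex_K this] y interior_subset
  have yz: "y + inverse s *\<^sub>R z \<in> interior K" by (auto simp: add.commute)
  have zy: "z + s *\<^sub>R y \<in> interior K"
    using add_ray_interior[OF z] y interior_subset s by (meson less_imp_le subsetD)
  have "F z + s * (gF z \<bullet> y) = F z + gF z \<bullet> ((z + s *\<^sub>R y) - z)" by simp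
  also have "\<dots> \<le> F (z + s *\<^sub>R y)" by (rule F_above_tangent[OF z zy])
  also have "z + s *\<^sub>R y = s *\<^sub>R (y + inverse s *\<^sub>R z)" using s by (simp add: algebra_simps)
  also have "F \<dots> = F (y + inverse s *\<^sub>R z) - \<nu> * ln s" by (rule F_scaleR[OF yz s])
  finally show ?thesis .
qed

lemma gradient_inner_nonpos_interior:
  assumes z: "z \<in> interior K" and y: "y \<in> interior K"
  shows "gF z \<bullet> y \<le> 0"
proof (rule ccontr)
  assume "\<not> gF z \<bullet> y \<le> 0"
  have "((\<lambda>s. y + inverse s *\<^sub>R z) \<longlongrightarrow> y + 0 *\<^sub>R z) at_top"
    by (intro tendsto_intros tendsto_inverse_0_at_top filterlim_ident)
  moreover have "isCont F y" using has_derivative_F[OF y] has_derivative_continuous by blast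
  ultimately have "((\<lambda>s. F (y + inverse s *\<^sub>R z)) \<longlongrightarrow> F y) at_top"
    using isCont_tendsto_compose by fastforce
  hence ev1: "eventually (\<lambda>s. F (y + inverse s *\<^sub>R z) < F y + 1) at_top"
    by (rule order_tendstoD) simp
  have "((\<lambda>s. (F y + 1 - F z) * inverse s - \<nu> * (ln s / s)) \<longlongrightarrow> (F y + 1 - F z) * 0 - \<nu> * 0) at_top"
    by (intro tendsto_intros tendsto_inverse_0_at_top filterlim_ident ln_x_over_x_tendsto_0)
  hence ev2: "eventually (\<lambda>s. (F y + 1 - F z) * inverse s - \<nu> * (ln s / s) < gF z \<bullet> y) at_top"
    using \<open>\<not> gF z \<bullet> y \<le> 0\<close> by (intro order_tendstoD) auto
  have "eventually (\<lambda>s::real. False) at_top"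
    using ev1 ev2 eventually_gt_at_top[of 0]
  proof eventually_elim
    case (elim s)
    have "F y + 1 - F z - \<nu> * ln s = s * ((F y + 1 - F z) * inverse s - \<nu> * (ln s / s))"
      using elim(3) by (simp add: field_simps)
    also have "\<dots> < s * (gF z \<bullet> y)" by (intro mult_strict_left_mono elim(2,3))
    finally have "F y + 1 - F z - \<nu> * ln s < s * (gF z \<bullet> y)" .
    thus False using F_ray_estimate[OF z y elim(3)] elim(1) by linarith
  qed
  thus False by simp
qed

lemma hessian_gradient_ray_estimate:
  assumes x: "x \<in> interior K" and y: "y \<in> interior K" and t: "t > 0" and e: "\<epsilon> > 0"
  shows "sqrt (HF x y \<bullet> y) + gF x \<bullet> y \<le> inverse t + \<epsilon> * t"
proof -
  define q where "q s = HF (x + s *\<^sub>R y) y \<bullet> y" for s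
  define \<phi> where "\<phi> s = gF (x + s *\<^sub>R y) \<bullet> y" for s
  define c where "c = inverse (sqrt (q 0 + \<epsilon>))"
  have ray: "x + s *\<^sub>R y \<in> interior K" if "0 \<le> s" for s
    using add_ray_interior[OF x] y interior_subset that by blast
  have q0: "0 \<le> q 0" using hessian_nonneg[OF x] by (simp add: q_def)
  have c: "c > 0" using q0 e by (simp add: c_def)
  \<comment> \<open>\<open>\<phi>' = q \<ge> (c + s)\<^sup>-\<^sup>2 - \<epsilon>\<close> by the Lipschitz bound\<close>
  have "\<phi> 0 + inverse (c + 0) + \<epsilon> * 0 \<le> \<phi> t + inverse (c + t) + \<epsilon> * t"
  proof (rule DERIV_nonneg_imp_nondecreasing[of 0 t])
    fix s assume s: "0 \<le> s" "s \<le> t"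
    have "(\<phi> has_real_derivative q s) (at s)"
      using gF_line_deriv[OF ray[OF s(1)]] by (simp add: \<phi>_def[abs_def] q_def)
    hence "((\<lambda>s. \<phi> s + inverse (c + s) + \<epsilon> * s) has_real_derivative
        q s - inverse ((c + s)\<^sup>2) + \<epsilon>) (at s)"
      using c s by (auto intro!: derivative_eq_intros simp: power2_eq_square)
    moreover have "self_concordant_on {0..s} q"
      unfolding q_def by (rule self_concordant_on_line) (use ray in auto)
    hence "inverse ((c + s)\<^sup>2) - \<epsilon> \<le> q s"
      unfolding c_def by (rule self_concordant_on_lower_bound[OF e s(1)])
    ultimately show "\<exists>D. ((\<lambda>s. \<phi> s + inverse (c + s) + \<epsilon> * s) has_real_derivative D) (at s) \<and> 0 \<le> D"
      by force
  qed (use t in simp)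
  moreover have "\<phi> t \<le> 0" unfolding \<phi>_def using gradient_inner_nonpos_interior[OF ray y] t by simp
  moreover have "inverse (c + t) \<le> inverse t" using c t by (simp add: le_imp_inverse_le)
  moreover have "sqrt (q 0) \<le> inverse c" using e q0 by (simp add: c_def)
  ultimately show ?thesis by (simp add: \<phi>_def q_def)
qed

lemma hessian_sqrt_le_neg_gradient_interior:
  assumes x: "x \<in> interior K" and y: "y \<in> interior K"
  shows "sqrt (HF x y \<bullet> y) \<le> - (gF x \<bullet> y)"
proof (rule ccontr)
  define A where "A = sqrt (HF x y \<bullet> y) + gF x \<bullet> y"
  assume "\<not> ?thesis"
  hence A: "A > 0" by (simp add: A_def)
  have "A \<le> inverse (4 / A) + A\<^sup>2 / 16 * (4 / A)"
    unfolding A_def using A by (intro hessian_gradient_ray_estimate[OF x y]) (simp_all add: A_def)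
  also have "\<dots> = A / 2" using A by (simp add: power2_eq_square field_simps)
  finally show False using A by simp
qed

lemma hessian_sqrt_le_neg_gradient:
  assumes x: "x \<in> interior K" and y: "y \<in> K"
  shows "sqrt (HF x y \<bullet> y) \<le> - (gF x \<bullet> y)"
proof -
  have "bounded_linear (HF x)" using linear_HF[OF x] linear_conv_bounded_linear by blast
  have y_lim: "((\<lambda>e. y + e *\<^sub>R x) \<longlongrightarrow> y) (at_right 0)"
    by (auto intro!: tendsto_eq_intros)
  have "((\<lambda>e. sqrt (HF x (y + e *\<^sub>R x) \<bullet> (y + e *\<^sub>R x)) + gF x \<bullet> (y + e *\<^sub>R x))
       \<longlongrightarrow> sqrt (HF x y \<bullet> y) + gF x \<bullet> y) (at_right 0)"
    by (intro tendsto_intros y_lim bounded_linear.tendsto[OF \<open>bounded_linear (HF x)\<close>])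
  moreover have "eventually (\<lambda>e. sqrt (HF x (y + e *\<^sub>R x) \<bullet> (y + e *\<^sub>R x)) + gF x \<bullet> (y + e *\<^sub>R x) \<le> 0) (at_right 0)"
  proof (rule eventually_at_right_real[OF zero_less_one, THEN eventually_mono])
    fix e :: real assume "e \<in> {0<..<1}"
    hence "y + e *\<^sub>R x \<in> interior K"
      using convex_cone_add_interior[OF cone_K convex_K cone_scaleR_interior[OF cone_K x] y]
      by (simp add: add.commute)
    thus "sqrt (HF x (y + e *\<^sub>R x) \<bullet> (y + e *\<^sub>R x)) + gF x \<bullet> (y + e *\<^sub>R x) \<le> 0"
      using hessian_sqrt_le_neg_gradient_interior[OF x] by fastforce
  qed
  ultimately have "sqrt (HF x y \<bullet> y) + gF x \<bullet> y \<le> 0" by (rule tendsto_upperbound) simp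
  thus ?thesis by simp
qed

lemma gradient_inner_nonpos: "x \<in> interior K \<Longrightarrow> y \<in> K \<Longrightarrow> gF x \<bullet> y \<le> 0"
  using hessian_sqrt_le_neg_gradient[of x y] hessian_nonneg[of x y] by (smt (verit) real_sqrt_ge_zero)

lemma hessian_le_gradient_sq:
  assumes "x \<in> interior K" "y \<in> K"
  shows "HF x y \<bullet> y \<le> (gF x \<bullet> y)\<^sup>2"
proof -
  have "(sqrt (HF x y \<bullet> y))\<^sup>2 \<le> (- (gF x \<bullet> y))\<^sup>2"
    using hessian_sqrt_le_neg_gradient[OF assms] hessian_nonneg[OF assms(1), of y]
    by (intro power_mono) auto
  thus ?thesis using hessian_nonneg[OF assms(1), of y] by simp
qed

lemma hessian_bounded_on_segment:
  assumes u: "u \<in> interior K" and v: "HF u v \<bullet> v < 1" and T: "T \<le> 1"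
    and seg: "\<And>s. 0 \<le> s \<Longrightarrow> s < T \<Longrightarrow> u + s *\<^sub>R v \<in> interior K"
  obtains M where "\<And>s. 0 \<le> s \<Longrightarrow> s < T \<Longrightarrow> HF (u + s *\<^sub>R v) v \<bullet> v \<le> M"
proof -
  define q where "q s = HF (u + s *\<^sub>R v) v \<bullet> v" for s
  define \<epsilon> where "\<epsilon> = (1 - q 0) / 2"
  define c where "c = inverse (sqrt (q 0 + \<epsilon>))"
  have q0: "0 \<le> q 0" "q 0 < 1" using hessian_nonneg[OF u] v by (simp_all add: q_def)
  hence e: "\<epsilon> > 0" by (simp add: \<epsilon>_def)
  have "q 0 + \<epsilon> < 1" "0 < q 0 + \<epsilon>" using q0 by (simp_all add: \<epsilon>_def field_simps)
  hence "sqrt (q 0 + \<epsilon>) < 1" "0 < sqrt (q 0 + \<epsilon>)" by simp_all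
  hence c: "1 < c" by (simp add: c_def one_less_inverse)
  have "q s \<le> inverse ((c - 1)\<^sup>2)" if s: "0 \<le> s" "s < T" for s
  proof -
    have "self_concordant_on {0..s} q"
      unfolding q_def by (rule self_concordant_on_line) (use seg s in auto)
    hence "q s \<le> inverse ((c - s)\<^sup>2) - \<epsilon>"
      unfolding c_def using s T c by (intro self_concordant_on_upper_bound[OF e]) (auto simp: c_def)
    also have "\<dots> \<le> inverse ((c - 1)\<^sup>2)"
    proof -
      have "inverse ((c - s)\<^sup>2) \<le> inverse ((c - 1)\<^sup>2)"
        using s T c by (intro le_imp_inverse_le power_mono) auto
      thus ?thesis using e by linarith
    qed
    finally show ?thesis .
  qed
  thus thesis using that unfolding q_def by blast
qed

lemma F_bounded_on_segment:
  assumes T: "T \<le> 1" and seg: "\<And>s. 0 \<le> s \<Longrightarrow> s < T \<Longrightarrow> u + s *\<^sub>R v \<in> interior K"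
    and hessian: "\<And>s. 0 \<le> s \<Longrightarrow> s < T \<Longrightarrow> HF (u + s *\<^sub>R v) v \<bullet> v \<le> M"
    and s: "0 \<le> s" "s < T"
  shows "F (u + s *\<^sub>R v) \<le> F u + \<bar>gF u \<bullet> v\<bar> + \<bar>M\<bar>"
proof -
  define L where "L = \<bar>gF u \<bullet> v\<bar> + \<bar>M\<bar>"
  have hessian': "HF (u + r *\<^sub>R v) v \<bullet> v \<le> \<bar>M\<bar>" if "0 \<le> r" "r < T" for r
    using hessian[OF that] by linarith
  have "gF (u + r *\<^sub>R v) \<bullet> v \<le> L" if r: "0 \<le> r" "r < T" for r
  proof -
    have "gF (u + r *\<^sub>R v) \<bullet> v \<le> gF (u + 0 *\<^sub>R v) \<bullet> v + \<bar>M\<bar> * r"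
      using r hessian' seg
      by (intro has_real_derivative_bounded_growth[where f' = "\<lambda>r. HF (u + r *\<^sub>R v) v \<bullet> v"])
         (auto intro!: gF_line_deriv)
    also have "\<dots> \<le> L"
    proof -
      have "\<bar>M\<bar> * r \<le> \<bar>M\<bar>" using r T by (intro mult_left_le) auto
      thus ?thesis unfolding L_def by simp
    qed
    finally show ?thesis .
  qed
  hence "F (u + s *\<^sub>R v) \<le> F (u + 0 *\<^sub>R v) + L * s"
    using s seg by (intro has_real_derivative_bounded_growth[where f' = "\<lambda>r. gF (u + r *\<^sub>R v) \<bullet> v"])
       (auto intro!: F_line_deriv)
  also have "\<dots> \<le> F u + L" using s T by (auto simp: L_def intro!: mult_left_le)
  finally show ?thesis by (simp add: L_def)
qed

lemma dikin_ellipsoid_interior: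
  assumes u: "u \<in> interior K" and v: "HF u v \<bullet> v < 1"
  shows "u + v \<in> interior K"
proof (rule ccontr)
  assume "u + v \<notin> interior K"
  then obtain T where T: "0 < T" "T \<le> 1" "u + T *\<^sub>R v \<in> frontier K"
    and seg: "\<And>s. 0 \<le> s \<Longrightarrow> s < T \<Longrightarrow> u + s *\<^sub>R v \<in> interior K"
    using first_exit_from_interior[OF closed_K u] by blast
  obtain M where "\<And>s. 0 \<le> s \<Longrightarrow> s < T \<Longrightarrow> HF (u + s *\<^sub>R v) v \<bullet> v \<le> M"
    using hessian_bounded_on_segment[OF u v T(2) seg] by blast
  note bounded = F_bounded_on_segment[OF T(2) seg this]
  have ev: "eventually (\<lambda>s. s \<in> {0<..<T}) (at_left T)" by (rule eventually_at_left_real[OF T(1)])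
  have "filterlim (\<lambda>s. F (u + s *\<^sub>R v)) at_top (at_left T)"
    using ev seg by (intro F_tendsto_at_top_approaching_frontier[OF T(3)])
      (auto intro!: tendsto_intros elim!: eventually_mono)
  hence "eventually (\<lambda>s. F u + \<bar>gF u \<bullet> v\<bar> + \<bar>M\<bar> < F (u + s *\<^sub>R v)) (at_left T)"
    by (simp add: filterlim_at_top_dense)
  with ev have "eventually (\<lambda>s. False) (at_left T)"
  proof eventually_elim
    case (elim s)
    thus False using bounded[of s] by simp
  qed
  thus False by simp
qed

lemma hessian_le_of_symmetric_pair:
  assumes x: "x \<in> interior K" and u: "0 \<le> gF x \<bullet> (u - x)"
    and plus: "u + h \<in> K" and minus: "u - h \<in> K"
  shows "HF x h \<bullet> h \<le> 2 * \<nu>\<^sup>2"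
proof -
  define g1 where "g1 = - (gF x \<bullet> (u + h))"
  define g2 where "g2 = - (gF x \<bullet> (u - h))"
  have Q1: "HF x (u + h) \<bullet> (u + h) \<le> g1\<^sup>2" and g1: "0 \<le> g1"
    using hessian_le_gradient_sq[OF x plus] gradient_inner_nonpos[OF x plus] by (auto simp: g1_def)
  have Q2: "HF x (u - h) \<bullet> (u - h) \<le> g2\<^sup>2" and g2: "0 \<le> g2"
    using hessian_le_gradient_sq[OF x minus] gradient_inner_nonpos[OF x minus] by (auto simp: g2_def)
  have parallelogram:
    "HF x (u + h) \<bullet> (u + h) + HF x (u - h) \<bullet> (u - h) = 2 * (HF x u \<bullet> u) + 2 * (HF x h \<bullet> h)"
    using linear_HF[OF x]
    by (simp add: linear_add linear_diff inner_add_left inner_add_right inner_diff_left inner_diff_right)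
  have "g1 + g2 \<le> 2 * \<nu>"
    using u gradient_inner_self[OF x] by (simp add: g1_def g2_def inner_add_right inner_diff_right)
  have "g1\<^sup>2 + g2\<^sup>2 \<le> (g1 + g2)\<^sup>2" using g1 g2 by (simp add: power2_eq_square algebra_simps)
  also have "\<dots> \<le> (2 * \<nu>)\<^sup>2" using \<open>g1 + g2 \<le> 2 * \<nu>\<close> g1 g2 by (intro power_mono) auto
  finally have "g1\<^sup>2 + g2\<^sup>2 \<le> 4 * \<nu>\<^sup>2" by (simp add: power2_eq_square)
  thus ?thesis using Q1 Q2 parallelogram hessian_nonneg[OF x, of u] by linarith
qed

lemma loewner_le_of_sublevel_set:
  assumes x: "x \<in> interior K" and u: "0 \<le> gF x \<bullet> (u - x)"
    and B: "linear B" "\<And>h. 0 \<le> B h \<bullet> h" and sublevel: "\<And>h. B h \<bullet> h < 1 \<Longrightarrow> u + h \<in> K"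
  shows "loewner_le (\<lambda>h. (1 / (4 * \<nu>\<^sup>2)) *\<^sub>R HF x h) B"
proof -
  have "HF x h \<bullet> h \<le> 2 * (2 * \<nu>\<^sup>2) * (B h \<bullet> h)" for h
  proof (rule quadratic_form_le_of_sublevel[OF linear_HF[OF x] B])
    fix k assume "B k \<bullet> k < 1"
    moreover have "B (- k) \<bullet> (- k) = B k \<bullet> k" using B(1) by (simp add: linear_neg)
    ultimately have "u + k \<in> K" "u - k \<in> K" using sublevel[of k] sublevel[of "- k"] by auto
    thus "HF x k \<bullet> k \<le> 2 * \<nu>\<^sup>2" by (rule hessian_le_of_symmetric_pair[OF x u])
  qed
  thus ?thesis using nu_nonzero by (simp add: loewner_le_def field_simps)
qed

lemma loewner_le_of_ellipsoid_subset:
  assumes "pos_def_op H" "ellipsoid H u \<subseteq> K" "x \<in> interior K" "0 \<le> gF x \<bullet> (u - x)"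
  shows "loewner_le (\<lambda>h. (1 / (4 * \<nu>\<^sup>2)) *\<^sub>R HF x h) H"
proof (rule loewner_le_of_sublevel_set[OF assms(3,4)])
  show "linear H" using assms(1) by (simp add: pos_def_op_def self_adjoint_def)
  show "0 \<le> H h \<bullet> h" for h
    using assms(1) \<open>linear H\<close> by (cases "h = 0") (auto simp: pos_def_op_def linear_0 less_imp_le)
  show "u + h \<in> K" if "H h \<bullet> h < 1" for h
    using that assms(2) by (auto simp: ellipsoid_def)
qed

lemma loewner_le_hessian:
  assumes x: "x \<in> interior K" and u: "u \<in> interior K" and "0 \<le> gF x \<bullet> (u - x)"
  shows "loewner_le (\<lambda>h. (1 / (4 * \<nu>\<^sup>2)) *\<^sub>R HF x h) (HF u)"
  using dikin_ellipsoid_interior[OF u] interior_subset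
  by (intro loewner_le_of_sublevel_set[OF x assms(3) linear_HF[OF u] hessian_nonneg[OF u]]) blast

lemma loewner_le_hessian_add:
  assumes x: "x \<in> interior K" and u: "u \<in> K"
  shows "loewner_le (HF (x + u)) (\<lambda>h. (4 * \<nu>\<^sup>2) *\<^sub>R HF x h)"
proof -
  have xu: "x + u \<in> interior K" by (rule convex_cone_add_interior[OF cone_K convex_K x u])
  have "0 \<le> gF (x + u) \<bullet> (x - (x + u))" using gradient_inner_nonpos[OF xu u] by simp
  from loewner_le_hessian[OF xu x this] show ?thesis
    using nu_nonzero by (simp add: loewner_le_def field_simps)
qed

end

theorem mainTheorem1:
  fixes K :: "'a::euclidean_space set" and \<nu> :: real
    and F :: "'a \<Rightarrow> real" and gF :: "'a \<Rightarrow> 'a" and HF :: "'a \<Rightarrow> 'a \<Rightarrow> 'a"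
  assumes "regular_cone K"
    and "normal_barrier K \<nu> F gF HF"
  shows "(\<forall>H u x. pos_def_op H \<longrightarrow> ellipsoid H u \<subseteq> K \<longrightarrow> x \<in> interior K \<longrightarrow>
            gF x \<bullet> (u - x) \<ge> 0 \<longrightarrow>
            loewner_le (\<lambda>h. (1 / (4 * \<nu>\<^sup>2)) *\<^sub>R HF x h) H)
       \<and> (\<forall>u x. x \<in> interior K \<longrightarrow> u \<in> interior K \<longrightarrow> gF x \<bullet> (u - x) \<ge> 0 \<longrightarrow>
            loewner_le (\<lambda>h. (1 / (4 * \<nu>\<^sup>2)) *\<^sub>R HF x h) (HF u))
       \<and> (\<forall>u x. x \<in> interior K \<longrightarrow> u \<in> K \<longrightarrow>
            loewner_le (HF (x + u)) (\<lambda>h. (4 * \<nu>\<^sup>2) *\<^sub>R HF x h))"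
proof -
  interpret normal_barrier_cone K \<nu> F gF HF using assms by unfold_locales
  show ?thesis
    using loewner_le_of_ellipsoid_subset loewner_le_hessian loewner_le_hessian_add by blast
qed

end
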